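(* Let $G$ be a $K_4$-free disk graph, let $\mathsf{opt}$ be the minimum size of an odd cycle transversal of $G$, and let $\mathcal{T}$ be a maximal packing of the triangles of $G$. Let $\rho_0\ge 1$ and let $X_1$ be an odd cycle transversal of $G-V(\mathcal{T})$ of size at most $\rho_0$ times the minimum size of an odd cycle transversal of $G-V(\mathcal{T})$. Set $S_1=V(\mathcal{T})\cup X_1$ and $a=|\mathcal{T}|/\mathsf{opt}$ (when $\mathsf{opt}>0$). Then $|S_1|\le (3a+\rho_0(1-a))\cdot\mathsf{opt}$, equivalently $|S_1|\le 3|\mathcal{T}|+\rho_0(\mathsf{opt}-|\mathcal{T}|)$.
   Context: A disk graph is the intersection graph of a finite set of closed disks in the plane; $K_4$-free means no complete subgraph on 4 vertices. An odd cycle transversal of $G$ is a set $S\subseteq V(G)$ with $G-S$ bipartite. A triangle is a set of three pairwise adjacent vertices; a packing of triangles is a collection of pairwise vertex-disjoint triangles, maximal if no further triangle of $G$ can be added; $V(\mathcal{T})$ is the union of the triangles in $\mathcal{T}$. In the paper $X_1$ is the output of a $\rho_0$-approximation algorithm for \textsc{Bipartization} on planar graphs (the graph $G-V(\mathcal{T})$ is triangle-free, hence planar). *)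

theory Defs
  imports "HOL-Analysis.Analysis"
begin

definition disk_graph :: "'a set \<Rightarrow> ('a \<Rightarrow> 'a \<Rightarrow> bool) \<Rightarrow> bool" where
  "disk_graph V E \<longleftrightarrow> finite V \<and>
     (\<forall>u v. E u v \<longrightarrow> u \<in> V \<and> v \<in> V \<and> u \<noteq> v) \<and>
     (\<exists>(c::'a \<Rightarrow> complex) (r::'a \<Rightarrow> real). (\<forall>u\<in>V. r u > 0) \<and>
        (\<forall>u\<in>V. \<forall>v\<in>V. u \<noteq> v \<longrightarrow>
            (E u v \<longleftrightarrow> cball (c u) (r u) \<inter> cball (c v) (r v) \<noteq> {})))"

definition K4_free :: "'a set \<Rightarrow> ('a \<Rightarrow> 'a \<Rightarrow> bool) \<Rightarrow> bool" where
  "K4_free V E \<longleftrightarrow> \<not> (\<exists>K. K \<subseteq> V \<and> card K = 4 \<and> (\<forall>u\<in>K. \<forall>v\<in>K. u \<noteq> v \<longrightarrow> E u v))"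

definition bipartite_on :: "'a set \<Rightarrow> ('a \<Rightarrow> 'a \<Rightarrow> bool) \<Rightarrow> bool" where
  "bipartite_on V E \<longleftrightarrow> (\<exists>f :: 'a \<Rightarrow> bool. \<forall>u\<in>V. \<forall>v\<in>V. E u v \<longrightarrow> f u \<noteq> f v)"

definition is_oct :: "'a set \<Rightarrow> ('a \<Rightarrow> 'a \<Rightarrow> bool) \<Rightarrow> 'a set \<Rightarrow> bool" where
  "is_oct V E S \<longleftrightarrow> S \<subseteq> V \<and> bipartite_on (V - S) E"

definition oct_number :: "'a set \<Rightarrow> ('a \<Rightarrow> 'a \<Rightarrow> bool) \<Rightarrow> nat" where
  "oct_number V E = Min (card ` {S. is_oct V E S})"

definition triangle :: "'a set \<Rightarrow> ('a \<Rightarrow> 'a \<Rightarrow> bool) \<Rightarrow> 'a set \<Rightarrow> bool" where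
  "triangle V E t \<longleftrightarrow> t \<subseteq> V \<and> card t = 3 \<and> (\<forall>u\<in>t. \<forall>v\<in>t. u \<noteq> v \<longrightarrow> E u v)"

definition triangle_packing :: "'a set \<Rightarrow> ('a \<Rightarrow> 'a \<Rightarrow> bool) \<Rightarrow> 'a set set \<Rightarrow> bool" where
  "triangle_packing V E T \<longleftrightarrow> (\<forall>t\<in>T. triangle V E t) \<and>
     (\<forall>t\<in>T. \<forall>t'\<in>T. t \<noteq> t' \<longrightarrow> t \<inter> t' = {})"

definition maximal_triangle_packing :: "'a set \<Rightarrow> ('a \<Rightarrow> 'a \<Rightarrow> bool) \<Rightarrow> 'a set set \<Rightarrow> bool" where
  "maximal_triangle_packing V E T \<longleftrightarrow> triangle_packing V E T \<and>
     (\<forall>t. triangle V E t \<and> t \<notin> T \<longrightarrow> \<not> triangle_packing V E (insert t T))"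

end

theory Submission
  imports Defs
begin

(* A minimum odd cycle transversal S of G must meet every triangle, so it contains a vertex of
   each of the |T| disjoint triangles of the packing; the remaining vertices S - V(T) form an odd
   cycle transversal of G - V(T). Hence the optimum for G - V(T) is at most opt - |T|, and
   |S1| <= 3|T| + |X1| <= 3|T| + rho0 (opt - |T|). *)

lemma bipartite_on_subset:
  assumes "bipartite_on W E" "U \<subseteq> W"
  shows "bipartite_on U E"
proof -
  obtain f :: "'a \<Rightarrow> bool" where f: "\<forall>u\<in>W. \<forall>v\<in>W. E u v \<longrightarrow> f u \<noteq> f v"
    using assms(1) unfolding bipartite_on_def by (elim exE) (erule that)
  have "\<forall>u\<in>U. \<forall>v\<in>U. E u v \<longrightarrow> f u \<noteq> f v"
    using f assms(2) by (meson subsetD)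
  then show ?thesis unfolding bipartite_on_def by blast
qed

lemma triangle_not_bipartite:
  assumes "triangle V E t"
  shows "\<not> bipartite_on t E"
proof
  assume "bipartite_on t E"
  then obtain f :: "'a \<Rightarrow> bool" where f: "\<forall>u\<in>t. \<forall>v\<in>t. E u v \<longrightarrow> f u \<noteq> f v"
    unfolding bipartite_on_def by (elim exE) (erule that)
  from assms have adj: "\<forall>u\<in>t. \<forall>v\<in>t. u \<noteq> v \<longrightarrow> E u v" and "card t = 3"
    by (auto simp: triangle_def)
  then obtain x y z where t: "t = {x, y, z}" "x \<noteq> y" "y \<noteq> z" "x \<noteq> z"
    by (auto simp: card_3_iff)
  have xyz: "x \<in> t" "y \<in> t" "z \<in> t" using t(1) by simp_all
  then have "E x y" "E y z" "E x z" using adj t(2-4) by blast+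
  then have "f x \<noteq> f y" "f y \<noteq> f z" "f x \<noteq> f z" using f xyz by blast+
  then show False by (cases "f x"; cases "f y"; cases "f z") simp_all
qed

lemma triangle_meets_oct:
  assumes "triangle V E t" "is_oct V E S"
  shows "t \<inter> S \<noteq> {}"
proof
  assume "t \<inter> S = {}"
  then have "t \<subseteq> V - S" using assms(1) by (auto simp: triangle_def)
  then have "bipartite_on t E"
    using assms(2) bipartite_on_subset unfolding is_oct_def by blast
  then show False using assms(1) triangle_not_bipartite by blast
qed

lemma is_oct_Diff:
  assumes "is_oct V E S"
  shows "is_oct (V - A) E (S - A)"
  using assms bipartite_on_subset[of "V - S" E "V - A - (S - A)"] by (auto simp: is_oct_def)

lemma finite_is_oct:
  assumes "finite V"
  shows "finite {S. is_oct V E S}"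
proof (rule finite_subset)
  show "{S. is_oct V E S} \<subseteq> Pow V" by (auto simp: is_oct_def)
qed (use assms in simp)

lemma oct_number_le:
  assumes "finite V" "is_oct V E S"
  shows "oct_number V E \<le> card S"
  unfolding oct_number_def using assms finite_is_oct by (intro Min_le) auto

lemma oct_number_attained:
  assumes "finite V"
  obtains S where "is_oct V E S" "card S = oct_number V E"
proof -
  have "is_oct V E V" by (simp add: is_oct_def bipartite_on_def)
  then have "oct_number V E \<in> card ` {S. is_oct V E S}"
    unfolding oct_number_def using assms finite_is_oct by (intro Min_in) auto
  then obtain S where "is_oct V E S" "card S = oct_number V E" by auto
  then show thesis by (rule that)
qed

lemma card_le_card_Int_Union_if_meets:
  assumes "disjoint T" "\<And>t. t \<in> T \<Longrightarrow> t \<inter> S \<noteq> {}" "finite S"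
  shows "card T \<le> card (S \<inter> \<Union>T)"
proof -
  define pick where "pick t = (SOME x. x \<in> t \<inter> S)" for t
  have pick: "pick t \<in> t \<inter> S" if "t \<in> T" for t
    unfolding pick_def using assms(2)[OF that] some_in_eq by metis
  have "inj_on pick T"
  proof (rule inj_onI)
    fix t t' assume "t \<in> T" "t' \<in> T" "pick t = pick t'"
    then have "\<not> disjnt t t'" using pick unfolding disjnt_def by (metis IntD1 disjoint_iff)
    then show "t = t'" using assms(1) \<open>t \<in> T\<close> \<open>t' \<in> T\<close> by (meson pairwiseD)
  qed
  moreover have "pick ` T \<subseteq> S \<inter> \<Union>T" using pick by blast
  ultimately show ?thesis using assms(3) by (intro card_inj_on_le) auto
qed

lemma triangle_packing_disjoint:
  assumes "triangle_packing V E T"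
  shows "disjoint T"
  using assms by (auto simp: triangle_packing_def pairwise_def disjnt_def)

lemma card_Union_triangle_packing:
  assumes "finite V" "triangle_packing V E T"
  shows "card (\<Union>T) = 3 * card T"
proof -
  have tri: "\<And>t. t \<in> T \<Longrightarrow> t \<subseteq> V \<and> card t = 3"
    using assms(2) by (auto simp: triangle_packing_def triangle_def)
  have "card (\<Union>T) = sum card T"
  proof (rule card_Union_disjoint)
    show "disjoint T" using assms(2) by (rule triangle_packing_disjoint)
    show "finite t" if "t \<in> T" for t using assms(1) tri[OF that] by (meson rev_finite_subset)
  qed
  also have "\<dots> = 3 * card T" using tri by simp
  finally show ?thesis .
qed

lemma oct_number_Diff_triangle_packing:
  assumes "finite V" "triangle_packing V E T"
  shows "oct_number (V - \<Union>T) E + card T \<le> oct_number V E"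
proof -
  obtain S where S: "is_oct V E S" "card S = oct_number V E"
    using oct_number_attained assms(1) by blast
  have "finite S" using assms(1) S(1) unfolding is_oct_def by (meson rev_finite_subset)
  have "oct_number (V - \<Union>T) E \<le> card (S - \<Union>T)"
    using assms(1) is_oct_Diff[OF S(1)] by (intro oct_number_le) auto
  moreover have "card T \<le> card (S \<inter> \<Union>T)"
  proof (rule card_le_card_Int_Union_if_meets)
    show "disjoint T" using assms(2) by (rule triangle_packing_disjoint)
    show "t \<inter> S \<noteq> {}" if "t \<in> T" for t
      using assms(2) that by (intro triangle_meets_oct[OF _ S(1)]) (simp add: triangle_packing_def)
  qed fact
  moreover have "card S = card (S \<inter> \<Union>T) + card (S - \<Union>T)"
    using \<open>finite S\<close> by (rule card_Int_Diff)
  ultimately show ?thesis using S(2) by linarith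
qed

theorem lemma7:
  fixes V :: "'a set" and E :: "'a \<Rightarrow> 'a \<Rightarrow> bool"
    and T :: "'a set set" and X1 :: "'a set" and \<rho>0 :: real
  assumes "disk_graph V E" and "K4_free V E"
    and "maximal_triangle_packing V E T"
    and "\<rho>0 \<ge> 1"
    and "is_oct (V - \<Union>T) E X1"
    and "real (card X1) \<le> \<rho>0 * real (oct_number (V - \<Union>T) E)"
  shows "(oct_number V E > 0 \<longrightarrow>
           (let opt = real (oct_number V E); a = real (card T) / opt in
              real (card (\<Union>T \<union> X1)) \<le> (3 * a + \<rho>0 * (1 - a)) * opt))
       \<and> real (card (\<Union>T \<union> X1))
           \<le> 3 * real (card T) + \<rho>0 * (real (oct_number V E) - real (card T))"
proof -
  let ?opt = "real (oct_number V E)" and ?t = "real (card T)"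
  have "finite V" using assms(1) by (simp add: disk_graph_def)
  have packing: "triangle_packing V E T"
    using assms(3) by (simp add: maximal_triangle_packing_def)
  have "real (oct_number (V - \<Union>T) E) \<le> ?opt - ?t"
    using oct_number_Diff_triangle_packing[OF \<open>finite V\<close> packing] by linarith
  then have "\<rho>0 * real (oct_number (V - \<Union>T) E) \<le> \<rho>0 * (?opt - ?t)"
    using assms(4) by (intro mult_left_mono) auto
  then have "real (card X1) \<le> \<rho>0 * (?opt - ?t)"
    using assms(6) by linarith
  moreover have "card (\<Union>T \<union> X1) \<le> 3 * card T + card X1"
    using card_Un_le[of "\<Union>T" X1] card_Union_triangle_packing[OF \<open>finite V\<close> packing] by simp
  ultimately have bound: "real (card (\<Union>T \<union> X1)) \<le> 3 * ?t + \<rho>0 * (?opt - ?t)"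
    by linarith
  show ?thesis
  proof (intro conjI impI)
    assume "oct_number V E > 0"
    then have "(3 * (?t / ?opt) + \<rho>0 * (1 - ?t / ?opt)) * ?opt = 3 * ?t + \<rho>0 * (?opt - ?t)"
      by (simp add: field_simps)
    then show "let opt = ?opt; a = ?t / opt in
        real (card (\<Union>T \<union> X1)) \<le> (3 * a + \<rho>0 * (1 - a)) * opt"
      using bound by (simp only: Let_def)
  qed (rule bound)
qed

end
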